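(* If a Turing degree $\mathbf d$ is loquaciously high for descending sequences, then every $\Pi^1_1$ subset of $\omega$ is c.e. relative to $\mathbf d$.
   Context: Fix a standard effective listing $(\mathcal L_n:n\in\omega)$ of computable linear orders. A degree $\mathbf d$ is loquaciously high for descending sequences if there are $D\in\mathbf d$ and a Turing functional $\Phi$ such that $\Phi^D(n,k)$ converges for all $n,k$, and whenever $\mathcal L_n$ is ill-founded, $k\mapsto\Phi^D(n,k)$ is an infinite strictly descending sequence in $\mathcal L_n$. *)

theory Defs
  imports Main "HOL-Library.Nat_Bijection"
begin

datatype rf = Zero | Succ | Proj nat | Orc | Comp rf "rf list" | PrimRec rf rf | Mu rf

inductive eval :: "(nat \<Rightarrow> nat) \<Rightarrow> rf \<Rightarrow> nat list \<Rightarrow> nat \<Rightarrow> bool" for f where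
  ev_zero: "eval f Zero xs 0"
| ev_succ: "eval f Succ (x # xs) (Suc x)"
| ev_proj: "i < length xs \<Longrightarrow> eval f (Proj i) xs (xs ! i)"
| ev_orc: "eval f Orc (x # xs) (f x)"
| ev_comp: "length ys = length hs \<Longrightarrow> (\<forall>i < length hs. eval f (hs ! i) xs (ys ! i))
            \<Longrightarrow> eval f g ys z \<Longrightarrow> eval f (Comp g hs) xs z"
| ev_prec0: "eval f g xs y \<Longrightarrow> eval f (PrimRec g h) (0 # xs) y"
| ev_precS: "eval f (PrimRec g h) (n # xs) y \<Longrightarrow> eval f h (n # y # xs) z
            \<Longrightarrow> eval f (PrimRec g h) (Suc n # xs) z"
| ev_mu: "eval f g (n # xs) 0 \<Longrightarrow> (\<forall>m < n. \<exists>y. eval f g (m # xs) (Suc y))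
            \<Longrightarrow> eval f (Mu g) xs n"

definition chi :: "nat set \<Rightarrow> nat \<Rightarrow> nat" where
  "chi D x = (if x \<in> D then 1 else 0)"

text \<open>Effective (primitive recursive) Goedel numbering of programs.\<close>
fun enc :: "rf \<Rightarrow> nat" where
  "enc Zero = prod_encode (0, 0)"
| "enc Succ = prod_encode (1, 0)"
| "enc (Proj i) = prod_encode (2, i)"
| "enc Orc = prod_encode (3, 0)"
| "enc (Comp g hs) = prod_encode (4, prod_encode (enc g, list_encode (map enc hs)))"
| "enc (PrimRec g h) = prod_encode (5, prod_encode (enc g, enc h))"
| "enc (Mu g) = prod_encode (6, enc g)"

definition comp_rel :: "rf \<Rightarrow> nat rel" where
  "comp_rel p = {(x, y). eval (\<lambda>_. 0) p [x, y] 0}"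

definition total2 :: "rf \<Rightarrow> bool" where
  "total2 p \<longleftrightarrow> (\<forall>x y. \<exists>z. eval (\<lambda>_. 0) p [x, y] z)"

text \<open>L n: the strict order (pairs (x,y) meaning x <_L y) coded by index n:
  if n codes a program computing a total binary function whose zero set is a strict
  linear order on omega, L n is that order; otherwise L n is the empty order.\<close>
definition L :: "nat \<Rightarrow> nat rel" where
  "L n = (if \<exists>p. n = enc p \<and> total2 p \<and> strict_linear_order (comp_rel p)
          then comp_rel (THE p. n = enc p) else {})"

definition loquaciously_high_ds :: "nat set \<Rightarrow> bool" where
  "loquaciously_high_ds D \<longleftrightarrow>
     (\<exists>\<Phi> g. (\<forall>n k. eval (chi D) \<Phi> [n, k] (g n k)) \<and>
            (\<forall>n. \<not> wf (L n) \<longrightarrow> (\<forall>k. (g n (Suc k), g n k) \<in> L n)))"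

definition Pi11 :: "nat set \<Rightarrow> bool" where
  "Pi11 A \<longleftrightarrow> (\<exists>e. \<forall>n. n \<in> A \<longleftrightarrow> (\<forall>f. \<exists>y. eval f e [n] y))"

definition ce_in :: "nat set \<Rightarrow> nat set \<Rightarrow> bool" where
  "ce_in D A \<longleftrightarrow> (\<exists>e. \<forall>n. n \<in> A \<longleftrightarrow> (\<exists>y. eval (chi D) e [n] y))"

end

theory Submission
  imports Defs
begin

(* Let A be Pi^1_1 via e, so n \<in> A iff e halts on n with every oracle.  The oracle prefixes
   along which e on input n has not yet halted form a computable tree T_n, with an infinite
   path exactly when n \<notin> A.  The Kleene-Brouwer order of T_n, extended to all of omega by
   placing the non-nodes above the nodes, is a computable linear order, uniformly in n, which
   is well-founded exactly when n \<in> A.  Given a loquacious D and the resulting indices, n \<in> A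
   iff the D-computable sequence for the order of T_n fails to descend at some k, which is a
   Sigma^0_1 condition relative to D. *)

section \<open>Recursive functions relative to an oracle\<close>

inductive_cases ev_ZeroE: "eval f Zero xs y"
inductive_cases ev_SuccE: "eval f Succ xs y"
inductive_cases ev_ProjE: "eval f (Proj i) xs y"
inductive_cases ev_OrcE: "eval f Orc xs y"
inductive_cases ev_CompE: "eval f (Comp g hs) xs y"
inductive_cases ev_PrimRecE: "eval f (PrimRec g h) xs y"
inductive_cases ev_MuE: "eval f (Mu g) xs y"

lemma eval_deterministic: "eval f p xs y \<Longrightarrow> eval f p xs z \<Longrightarrow> y = z"
proof (induction arbitrary: z rule: eval.induct)
  case (ev_comp ys hs xs g y)
  from ev_comp.prems obtain ys' where ys': "length ys' = length hs"
    "\<forall>i<length hs. eval f (hs ! i) xs (ys' ! i)" "eval f g ys' z"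
    by (rule ev_CompE)
  then have "\<forall>i<length hs. ys ! i = ys' ! i" using ev_comp.IH(1) by blast
  then have "ys' = ys" using ys'(1) ev_comp.hyps(1) by (simp add: nth_equalityI)
  then show ?case using ys'(3) ev_comp.IH(2) by blast
next
  case (ev_precS g h n xs y z')
  from ev_precS.prems obtain y' where "eval f (PrimRec g h) (n # xs) y'" "eval f h (n # y' # xs) z"
    by (cases rule: ev_PrimRecE) auto
  then show ?case using ev_precS.IH by blast
next
  case (ev_mu g n xs)
  from ev_mu.prems have "eval f g (z # xs) 0" "\<forall>m<z. \<exists>y. eval f g (m # xs) (Suc y)"
    by (auto elim: ev_MuE)
  then have "\<not> n < z" "\<not> z < n" using ev_mu.IH by (metis Zero_not_Suc)+
  then show ?case by simp
next
  case (ev_prec0 g xs y h)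
  from ev_prec0.prems show ?case by (cases rule: ev_PrimRecE) (use ev_prec0.IH in auto)
qed (auto elim: ev_ZeroE ev_SuccE ev_ProjE ev_OrcE)

definition recursive :: "(nat \<Rightarrow> nat) \<Rightarrow> nat \<Rightarrow> (nat list \<Rightarrow> nat) \<Rightarrow> bool" where
  "recursive f k F \<longleftrightarrow> (\<exists>p. \<forall>xs. length xs = k \<longrightarrow> eval f p xs (F xs))"

fun const_prog :: "nat \<Rightarrow> rf" where
  "const_prog 0 = Zero"
| "const_prog (Suc c) = Comp Succ [const_prog c]"

lemma eval_const_prog: "eval f (const_prog c) xs c"
proof (induction c)
  case 0 then show ?case by (simp add: ev_zero)
next
  case (Suc c)
  have "eval f Succ [c] (Suc c)" by (rule ev_succ)
  then show ?case using Suc by (auto intro!: ev_comp[where ys="[c]"])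
qed

lemma recursive_const: "recursive f k (\<lambda>xs. c)"
  unfolding recursive_def using eval_const_prog by blast

lemma recursive_proj: "i < k \<Longrightarrow> recursive f k (\<lambda>xs. xs ! i)"
  unfolding recursive_def using ev_proj by blast

lemma recursive_Suc_arg: "recursive f 1 (\<lambda>xs. Suc (xs ! 0))"
  unfolding recursive_def
proof (intro exI allI impI)
  fix xs :: "nat list" assume "length xs = 1"
  then obtain x where "xs = [x]" by (cases xs) auto
  then show "eval f Succ xs (Suc (xs ! 0))" using ev_succ by simp
qed

lemma recursive_cong:
  "recursive f k F \<Longrightarrow> (\<And>xs. length xs = k \<Longrightarrow> F xs = F' xs) \<Longrightarrow> recursive f k F'"
  unfolding recursive_def by metis

lemma recursive_comp:
  assumes g: "recursive f m G" and h: "\<forall>i<m. recursive f k (H i)"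
  shows "recursive f k (\<lambda>xs. G (map (\<lambda>i. H i xs) [0..<m]))"
proof -
  obtain g where g: "\<forall>ys. length ys = m \<longrightarrow> eval f g ys (G ys)"
    using g unfolding recursive_def by blast
  have "\<forall>i. \<exists>p. i < m \<longrightarrow> (\<forall>xs. length xs = k \<longrightarrow> eval f p xs (H i xs))"
    using h unfolding recursive_def by blast
  then obtain P where P: "\<And>i xs. i < m \<Longrightarrow> length xs = k \<Longrightarrow> eval f (P i) xs (H i xs)"
    by metis
  show ?thesis unfolding recursive_def
  proof (intro exI allI impI)
    fix xs :: "nat list" assume l: "length xs = k"
    show "eval f (Comp g (map P [0..<m])) xs (G (map (\<lambda>i. H i xs) [0..<m]))"
      by (rule ev_comp[where ys="map (\<lambda>i. H i xs) [0..<m]"]) (use P l g in auto)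
  qed
qed

lemma recursive_comp1:
  assumes "recursive f 1 G" "recursive f k A"
  shows "recursive f k (\<lambda>xs. G [A xs])"
proof -
  have "recursive f k (\<lambda>xs. G (map (\<lambda>i. (\<lambda>i. A) i xs) [0..<1]))"
    by (rule recursive_comp) (use assms in auto)
  then show ?thesis by simp
qed

lemma recursive_comp2:
  assumes "recursive f 2 G" "recursive f k A" "recursive f k B"
  shows "recursive f k (\<lambda>xs. G [A xs, B xs])"
proof -
  have "recursive f k (\<lambda>xs. G (map (\<lambda>i. (\<lambda>i. if i = 0 then A else B) i xs) [0..<2]))"
    by (rule recursive_comp) (use assms in auto)
  then show ?thesis by (simp add: upt_rec)
qed

lemma recursive_comp3:
  assumes "recursive f 3 G" "recursive f k A" "recursive f k B" "recursive f k C"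
  shows "recursive f k (\<lambda>xs. G [A xs, B xs, C xs])"
proof -
  have "recursive f k (\<lambda>xs. G (map (\<lambda>i. (\<lambda>i. if i = 0 then A else if i = 1 then B else C) i xs) [0..<3]))"
    by (rule recursive_comp) (use assms in auto)
  then show ?thesis by (simp add: upt_rec)
qed

lemma recursive_if_const:
  "(c \<Longrightarrow> recursive f k A) \<Longrightarrow> (\<not> c \<Longrightarrow> recursive f k B) \<Longrightarrow>
    recursive f k (\<lambda>xs. if c then A xs else B xs)"
  by (cases c) simp_all

lemma recursive_Cons:
  assumes A: "recursive f k A" and B: "recursive f (Suc k) B"
  shows "recursive f k (\<lambda>l. B (A l # l))"
proof -
  have "recursive f k (\<lambda>l. B (map (\<lambda>i. (\<lambda>i. if i = 0 then A else (\<lambda>l. l ! (i - 1))) i l) [0..<Suc k]))"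
    by (rule recursive_comp[OF B]) (auto intro: A recursive_proj)
  then show ?thesis
  proof (rule recursive_cong)
    fix l :: "nat list" assume "length l = k"
    then have "map (\<lambda>i. (\<lambda>i. if i = 0 then A else (\<lambda>l. l ! (i - 1))) i l) [0..<Suc k] = A l # l"
      by (intro nth_equalityI) (auto simp: nth_Cons' simp del: upt_Suc)
    then show "B (map (\<lambda>i. (\<lambda>i. if i = 0 then A else (\<lambda>l. l ! (i - 1))) i l) [0..<Suc k]) = B (A l # l)"
      by simp
  qed
qed

(* The arities are passed as equations so that the rule also applies to numeral arities. *)
lemma recursive_prim_rec:
  assumes arity: "k1 = Suc k" "k2 = Suc (Suc k)"
    and G: "recursive f k G" and H: "recursive f k2 H"
    and F0: "\<And>xs. length xs = k \<Longrightarrow> F (0 # xs) = G xs"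
    and FS: "\<And>n xs. length xs = k \<Longrightarrow> F (Suc n # xs) = H (n # F (n # xs) # xs)"
  shows "recursive f k1 F"
proof -
  obtain g where g: "\<forall>ys. length ys = k \<longrightarrow> eval f g ys (G ys)"
    using G unfolding recursive_def by blast
  obtain h where h: "\<forall>ys. length ys = Suc (Suc k) \<longrightarrow> eval f h ys (H ys)"
    using H arity unfolding recursive_def by blast
  have PrimRec: "eval f (PrimRec g h) (n # xs) (F (n # xs))" if l: "length xs = k" for n xs
  proof (induction n)
    case 0 then show ?case using g l F0 by (auto intro: ev_prec0)
  next
    case (Suc n) then show ?case using h l FS by (auto intro: ev_precS)
  qed
  show ?thesis unfolding recursive_def arity
  proof (intro exI allI impI)
    fix xs :: "nat list" assume "length xs = Suc k"
    then obtain n ys where "xs = n # ys" "length ys = k" by (cases xs) auto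
    then show "eval f (PrimRec g h) xs (F xs)" using PrimRec by simp
  qed
qed

lemma eval_Mu_Least:
  assumes h: "\<And>k. eval f h (k # xs) (G (k # xs))" and k0: "G (k0 # xs) = 0"
  shows "eval f (Mu h) xs (LEAST k. G (k # xs) = 0)"
proof -
  let ?n = "LEAST k. G (k # xs) = 0"
  have below: "\<forall>m<?n. \<exists>y. eval f h (m # xs) (Suc y)"
  proof (intro allI impI)
    fix m assume "m < ?n"
    then have "G (m # xs) \<noteq> 0" using not_less_Least by blast
    then obtain y where "G (m # xs) = Suc y" using not0_implies_Suc by blast
    then show "\<exists>y. eval f h (m # xs) (Suc y)" using h by metis
  qed
  have "G (?n # xs) = 0" using k0 by (rule LeastI)
  then have "eval f h (?n # xs) 0" using h by metis
  then show ?thesis using below by (rule ev_mu)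
qed

lemma eval_Mu_iff:
  assumes "\<And>k. eval f h (k # xs) (G (k # xs))"
  shows "(\<exists>y. eval f (Mu h) xs y) \<longleftrightarrow> (\<exists>k. G (k # xs) = 0)"
proof
  assume "\<exists>y. eval f (Mu h) xs y"
  then obtain y where "eval f h (y # xs) 0" by (auto elim: ev_MuE)
  then show "\<exists>k. G (k # xs) = 0" using assms eval_deterministic by metis
qed (use assms eval_Mu_Least in blast)

lemma recursive_Least_zero:
  assumes G: "recursive f (Suc k) G" and ex: "\<And>xs. length xs = k \<Longrightarrow> \<exists>n. G (n # xs) = 0"
  shows "recursive f k (\<lambda>xs. LEAST n. G (n # xs) = 0)"
proof -
  obtain g where g: "\<forall>ys. length ys = Suc k \<longrightarrow> eval f g ys (G ys)"
    using G unfolding recursive_def by blast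
  show ?thesis unfolding recursive_def
    by (metis eval_Mu_Least ex g length_Cons)
qed

lemma recursive_Suc: "recursive f k A \<Longrightarrow> recursive f k (\<lambda>xs. Suc (A xs))"
  using recursive_comp1[OF recursive_Suc_arg] by simp

lemma recursive_add_args: "recursive f 2 (\<lambda>l. l ! 0 + l ! 1)"
proof (rule recursive_prim_rec[where k=1 and G="\<lambda>xs. xs ! 0" and H="\<lambda>l. Suc (l ! 1)"])
  show "recursive f 1 (\<lambda>xs. xs ! 0)" by (rule recursive_proj) simp
  show "recursive f 3 (\<lambda>l. Suc (l ! 1))" by (rule recursive_Suc, rule recursive_proj) simp
qed auto

lemma recursive_add:
  "recursive f k A \<Longrightarrow> recursive f k B \<Longrightarrow> recursive f k (\<lambda>xs. A xs + B xs)"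
  using recursive_comp2[OF recursive_add_args] by simp

lemma recursive_pred_arg: "recursive f 1 (\<lambda>l. l ! 0 - 1)"
proof (rule recursive_prim_rec[where k=0 and G="\<lambda>xs. 0" and H="\<lambda>l. l ! 0"])
  show "recursive f 0 (\<lambda>xs. 0)" by (rule recursive_const)
  show "recursive f 2 (\<lambda>l. l ! 0)" by (rule recursive_proj) simp
qed auto

lemma recursive_pred: "recursive f k A \<Longrightarrow> recursive f k (\<lambda>xs. A xs - 1)"
  using recursive_comp1[OF recursive_pred_arg] by simp

lemma recursive_diff_args: "recursive f 2 (\<lambda>l. l ! 1 - l ! 0)"
proof (rule recursive_prim_rec[where k=1 and G="\<lambda>xs. xs ! 0" and H="\<lambda>l. l ! 1 - 1"])
  show "recursive f 1 (\<lambda>xs. xs ! 0)" by (rule recursive_proj) simp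
  show "recursive f 3 (\<lambda>l. l ! 1 - 1)" by (rule recursive_pred, rule recursive_proj) simp
qed auto

lemma recursive_diff:
  "recursive f k A \<Longrightarrow> recursive f k B \<Longrightarrow> recursive f k (\<lambda>xs. A xs - B xs)"
  using recursive_comp2[OF recursive_diff_args, where A=B and B=A] by simp

lemma recursive_mult_args: "recursive f 2 (\<lambda>l. l ! 0 * l ! 1)"
proof (rule recursive_prim_rec[where k=1 and G="\<lambda>xs. 0" and H="\<lambda>l. l ! 1 + l ! 2"])
  show "recursive f 1 (\<lambda>xs. 0)" by (rule recursive_const)
  show "recursive f 3 (\<lambda>l. l ! 1 + l ! 2)" by (intro recursive_add recursive_proj) simp_all
qed auto

lemma recursive_mult:
  "recursive f k A \<Longrightarrow> recursive f k B \<Longrightarrow> recursive f k (\<lambda>xs. A xs * B xs)"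
  using recursive_comp2[OF recursive_mult_args] by simp

lemma recursive_prod:
  "(\<And>i. i < (m::nat) \<Longrightarrow> recursive f K (H i)) \<Longrightarrow> recursive f K (\<lambda>l. \<Prod>i<m. H i l)"
proof (induction m)
  case 0 then show ?case by (simp add: recursive_const)
next
  case (Suc m) then show ?case by (simp add: recursive_mult)
qed

lemma recursive_if_zero_args: "recursive f 3 (\<lambda>l. if l ! 0 = 0 then l ! 1 else l ! 2)"
proof (rule recursive_prim_rec[where k=2 and G="\<lambda>xs. xs ! 0" and H="\<lambda>l. l ! 3"])
  show "recursive f 2 (\<lambda>xs. xs ! 0)" by (rule recursive_proj) simp
  show "recursive f 4 (\<lambda>l. l ! 3)" by (rule recursive_proj) simp
qed auto

lemma recursive_if_zero:
  "recursive f k C \<Longrightarrow> recursive f k A \<Longrightarrow> recursive f k B \<Longrightarrow>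
    recursive f k (\<lambda>xs. if C xs = 0 then A xs else B xs)"
proof -
  assume "recursive f k C" "recursive f k A" "recursive f k B"
  then have "recursive f k (\<lambda>xs. (\<lambda>l. if l ! 0 = 0 then l ! 1 else l ! 2) [C xs, A xs, B xs])"
    by (intro recursive_comp3[OF recursive_if_zero_args])
  then show ?thesis by (simp cong: if_cong)
qed

(* As in comp_rel, the value 0 encodes truth. *)
definition decidable :: "(nat \<Rightarrow> nat) \<Rightarrow> nat \<Rightarrow> (nat list \<Rightarrow> bool) \<Rightarrow> bool" where
  "decidable f k P \<longleftrightarrow> recursive f k (\<lambda>xs. if P xs then 0 else 1)"

lemma recursive_if: assumes "decidable f k P" "recursive f k A" "recursive f k B"
  shows "recursive f k (\<lambda>xs. if P xs then A xs else B xs)"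
proof -
  have "recursive f k (\<lambda>xs. if (if P xs then 0 else 1) = (0::nat) then A xs else B xs)"
    using recursive_if_zero assms unfolding decidable_def by blast
  then show ?thesis by (rule recursive_cong) simp
qed

lemma decidable_cong:
  "decidable f k P \<Longrightarrow> (\<And>xs. length xs = k \<Longrightarrow> P xs = P' xs) \<Longrightarrow> decidable f k P'"
  unfolding decidable_def by (erule recursive_cong) simp

lemma decidableI:
  "recursive f k C \<Longrightarrow> (\<And>xs. length xs = k \<Longrightarrow> (C xs = 0) = P xs) \<Longrightarrow> decidable f k P"
  unfolding decidable_def
  by (rule recursive_cong, rule recursive_if_zero[where C=C and A="\<lambda>_. 0" and B="\<lambda>_. 1"])
    (auto intro: recursive_const)

lemma decidable_le:
  "recursive f k A \<Longrightarrow> recursive f k B \<Longrightarrow> decidable f k (\<lambda>xs. A xs \<le> B xs)"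
  by (rule decidableI[where C="\<lambda>xs. A xs - B xs"]) (auto intro: recursive_diff)

lemma decidable_less:
  "recursive f k A \<Longrightarrow> recursive f k B \<Longrightarrow> decidable f k (\<lambda>xs. A xs < B xs)"
  by (rule decidableI[where C="\<lambda>xs. Suc (A xs) - B xs"]) (auto intro: recursive_diff recursive_Suc)

lemma decidable_not: "decidable f k P \<Longrightarrow> decidable f k (\<lambda>xs. \<not> P xs)"
  unfolding decidable_def
  by (rule recursive_cong,
      rule recursive_if_zero[where C="\<lambda>xs. if P xs then 0 else 1" and A="\<lambda>_. 1" and B="\<lambda>_. 0"])
     (auto intro: recursive_const)

lemma decidable_eq:
  "recursive f k A \<Longrightarrow> recursive f k B \<Longrightarrow> decidable f k (\<lambda>xs. A xs = B xs)"
  by (rule decidableI[where C="\<lambda>xs. (A xs - B xs) + (B xs - A xs)"]) (auto intro: recursive_diff recursive_add)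

lemma decidable_conj:
  "decidable f k P \<Longrightarrow> decidable f k Q \<Longrightarrow> decidable f k (\<lambda>xs. P xs \<and> Q xs)"
  unfolding decidable_def
  by (rule recursive_cong, rule recursive_if[where P=P and A="\<lambda>xs. if Q xs then 0 else 1" and B="\<lambda>_. 1"])
     (auto simp: decidable_def intro: recursive_const)

lemma decidable_disj:
  "decidable f k P \<Longrightarrow> decidable f k Q \<Longrightarrow> decidable f k (\<lambda>xs. P xs \<or> Q xs)"
  using decidable_not[of f k "\<lambda>xs. \<not> P xs \<and> \<not> Q xs"] decidable_conj[OF decidable_not decidable_not]
  by simp

lemma recursive_Least:
  assumes "decidable f (Suc k) Q" "\<And>xs. length xs = k \<Longrightarrow> \<exists>n. Q (n # xs)"
  shows "recursive f k (\<lambda>xs. LEAST n. Q (n # xs))"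
proof -
  have "recursive f k (\<lambda>xs. LEAST n. (\<lambda>xs. if Q xs then 0 else 1) (n # xs) = (0::nat))"
    by (rule recursive_Least_zero) (use assms in \<open>auto simp: decidable_def\<close>)
  moreover have "\<And>xs. (LEAST n. (\<lambda>xs. if Q xs then 0 else 1) (n # xs) = (0::nat)) = (LEAST n. Q (n # xs))"
    by simp
  ultimately show ?thesis by simp
qed

lemma recursive_tl: "recursive f k B \<Longrightarrow> recursive f (Suc k) (\<lambda>l. B (tl l))"
proof -
  assume "recursive f k B"
  then have "recursive f (Suc k) (\<lambda>l. B (map (\<lambda>i. (\<lambda>i l. l ! Suc i) i l) [0..<k]))"
    by (intro recursive_comp) (auto intro: recursive_proj)
  then show ?thesis
  proof (rule recursive_cong)
    fix l :: "nat list" assume "length l = Suc k"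
    then have "map (\<lambda>i. l ! Suc i) [0..<k] = tl l"
      by (intro nth_equalityI) (auto simp: nth_tl)
    then show "B (map (\<lambda>i. (\<lambda>i l. l ! Suc i) i l) [0..<k]) = B (tl l)" by simp
  qed
qed

lemma Least_eq_bound_iff:
  "(LEAST n. n = b \<or> \<not> P n) = (b::nat) \<longleftrightarrow> (\<forall>i<b. P i)"
proof
  assume "(LEAST n. n = b \<or> \<not> P n) = b"
  then show "\<forall>i<b. P i" by (metis not_less_Least)
next
  assume "\<forall>i<b. P i"
  then show "(LEAST n. n = b \<or> \<not> P n) = b"
    by (intro Least_equality) (auto simp: not_less[symmetric])
qed

lemma decidable_ball:
  assumes B: "recursive f k B" and Q: "decidable f (Suc k) Q"
  shows "decidable f k (\<lambda>xs. \<forall>i<B xs. Q (i # xs))"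
proof -
  have "decidable f (Suc k) (\<lambda>l. l ! 0 = B (tl l) \<or> \<not> Q l)"
    by (intro decidable_disj decidable_eq decidable_not recursive_proj recursive_tl B Q) simp
  then have "recursive f k (\<lambda>xs. LEAST n. (\<lambda>l. l ! 0 = B (tl l) \<or> \<not> Q l) (n # xs))"
    by (rule recursive_Least) auto
  then have "recursive f k (\<lambda>xs. LEAST n. n = B xs \<or> \<not> Q (n # xs))" by simp
  then have "decidable f k (\<lambda>xs. (LEAST n. n = B xs \<or> \<not> Q (n # xs)) = B xs)"
    using B by (rule decidable_eq)
  then show ?thesis by (simp add: Least_eq_bound_iff)
qed

lemma decidable_bex:
  assumes B: "recursive f k B" and Q: "decidable f (Suc k) Q"
  shows "decidable f k (\<lambda>xs. \<exists>i<B xs. Q (i # xs))"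
  using decidable_not[OF decidable_ball[OF B decidable_not[OF Q]]] by simp

section \<open>Coding of pairs and lists\<close>

lemma triangle_mono: "i \<le> j \<Longrightarrow> triangle i \<le> triangle j"
  by (induction j) (auto simp: le_Suc_eq)

lemma recursive_triangle_arg: "recursive f 1 (\<lambda>l. triangle (l ! 0))"
proof (rule recursive_prim_rec[where k=0 and G="\<lambda>xs. 0" and H="\<lambda>l. l ! 1 + Suc (l ! 0)"])
  show "recursive f 0 (\<lambda>xs. 0)" by (rule recursive_const)
  show "recursive f 2 (\<lambda>l. l ! 1 + Suc (l ! 0))" by (intro recursive_add recursive_Suc recursive_proj) simp_all
qed auto

lemma recursive_triangle:
  "recursive f k A \<Longrightarrow> recursive f k (\<lambda>xs. triangle (A xs))"
  using recursive_comp1[OF recursive_triangle_arg] by simp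

lemma recursive_prod_encode:
  "recursive f k A \<Longrightarrow> recursive f k B \<Longrightarrow> recursive f k (\<lambda>xs. prod_encode (A xs, B xs))"
  unfolding prod_encode_def by (simp add: recursive_add recursive_triangle)

definition tri_root :: "nat \<Rightarrow> nat" where "tri_root m = (LEAST s. m < triangle (Suc s))"

lemma prod_decode_tri_root:
  "prod_decode m = (m - triangle (tri_root m), tri_root m - (m - triangle (tri_root m)))"
proof -
  obtain a b where ab: "prod_decode m = (a, b)" by (cases "prod_decode m")
  have "prod_encode (a, b) = m" using prod_decode_inverse[of m] ab by simp
  then have m: "m = triangle (a + b) + a" by (simp add: prod_encode_def)
  have "tri_root m = a + b" unfolding tri_root_def
  proof (rule Least_equality)
    show "m < triangle (Suc (a + b))" using m by simp
  next
    fix s assume "m < triangle (Suc s)"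
    then show "a + b \<le> s"
      using triangle_mono[of "Suc s" "a + b"] m by linarith
  qed
  then have "m - triangle (tri_root m) = a" "tri_root m - (m - triangle (tri_root m)) = b" using m by simp_all
  then show ?thesis using ab by simp
qed

lemma recursive_tri_root:
  assumes A: "recursive f k A"
  shows "recursive f k (\<lambda>xs. tri_root (A xs))"
proof -
  have "decidable f (Suc k) (\<lambda>l. A (tl l) < triangle (Suc (l ! 0)))"
    by (intro decidable_less recursive_tl A recursive_triangle recursive_Suc recursive_proj) simp
  then have "recursive f k (\<lambda>xs. LEAST s. (\<lambda>l. A (tl l) < triangle (Suc (l ! 0))) (s # xs))"
  proof (rule recursive_Least)
    fix xs :: "nat list"
    have "A xs < triangle (Suc (A xs))" by simp
    then show "\<exists>n. (\<lambda>l. A (tl l) < triangle (Suc (l ! 0))) (n # xs)"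
      by (intro exI[of _ "A xs"]) simp
  qed
  then show ?thesis by (simp add: tri_root_def)
qed

lemma recursive_fst_prod_decode:
  "recursive f k A \<Longrightarrow> recursive f k (\<lambda>xs. fst (prod_decode (A xs)))"
  unfolding prod_decode_tri_root fst_conv by (intro recursive_diff recursive_triangle recursive_tri_root)

lemma recursive_snd_prod_decode:
  "recursive f k A \<Longrightarrow> recursive f k (\<lambda>xs. snd (prod_decode (A xs)))"
  unfolding prod_decode_tri_root snd_conv by (intro recursive_diff recursive_triangle recursive_tri_root)

definition code_hd :: "nat \<Rightarrow> nat" where "code_hd x = fst (prod_decode (x - 1))"
definition code_tl :: "nat \<Rightarrow> nat" where "code_tl x = snd (prod_decode (x - 1))"

lemma recursive_code_hd:
  "recursive f k A \<Longrightarrow> recursive f k (\<lambda>xs. code_hd (A xs))"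
  unfolding code_hd_def by (intro recursive_fst_prod_decode recursive_pred)

lemma recursive_code_tl:
  "recursive f k A \<Longrightarrow> recursive f k (\<lambda>xs. code_tl (A xs))"
  unfolding code_tl_def by (intro recursive_snd_prod_decode recursive_pred)

lemma recursive_funpow_arg:
  assumes g: "recursive f 1 (\<lambda>l. g (l ! 0))"
  shows "recursive f 2 (\<lambda>l. (g ^^ (l ! 0)) (l ! 1))"
proof (rule recursive_prim_rec[where k=1 and G="\<lambda>xs. xs ! 0" and H="\<lambda>l. g (l ! 1)"])
  show "recursive f 1 (\<lambda>xs. xs ! 0)" by (rule recursive_proj) simp
  have "recursive f 3 (\<lambda>xs. (\<lambda>l. g (l ! 0)) [xs ! 1])"
    by (rule recursive_comp1[OF g], rule recursive_proj) simp
  then show "recursive f 3 (\<lambda>l. g (l ! 1))" by simp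
qed auto

lemma recursive_code_tl_funpow:
  "recursive f k A \<Longrightarrow> recursive f k B \<Longrightarrow> recursive f k (\<lambda>xs. (code_tl ^^ (A xs)) (B xs))"
proof -
  assume A: "recursive f k A" and B: "recursive f k B"
  have "recursive f 1 (\<lambda>l. code_tl (l ! 0))" by (intro recursive_code_tl recursive_proj) simp
  then have "recursive f 2 (\<lambda>l. (code_tl ^^ (l ! 0)) (l ! 1))" by (rule recursive_funpow_arg)
  from recursive_comp2[OF this A B] show ?thesis by simp
qed

lemma list_decode_code_tl: "list_decode (code_tl y) = tl (list_decode y)"
proof (cases y)
  case 0
  have "prod_decode 0 = (0, 0)" using prod_encode_inverse[of "(0,0)"] by (simp add: prod_encode_def)
  then show ?thesis using 0 by (simp add: code_tl_def)
next
  case (Suc n) then show ?thesis by (simp add: code_tl_def split: prod.split)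
qed

lemma hd_list_decode: "list_decode y \<noteq> [] \<Longrightarrow> hd (list_decode y) = code_hd y"
  by (cases y) (auto simp: code_hd_def split: prod.split)

lemma list_decode_eq_Nil: "list_decode y = [] \<longleftrightarrow> y = 0"
  by (cases y) (auto split: prod.split)

lemma list_decode_code_tl_funpow: "list_decode ((code_tl ^^ i) x) = drop i (list_decode x)"
  by (induction i) (auto simp: list_decode_code_tl drop_Suc tl_drop)

lemma length_list_decode_Least: "length (list_decode x) = (LEAST i. (code_tl ^^ i) x = 0)"
proof (rule sym, rule Least_equality)
  show "(code_tl ^^ length (list_decode x)) x = 0"
    using list_decode_code_tl_funpow[of "length (list_decode x)" x] list_decode_eq_Nil by simp
next
  fix i assume "(code_tl ^^ i) x = 0"
  then have "drop i (list_decode x) = []" using list_decode_code_tl_funpow[of i x] by simp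
  then show "length (list_decode x) \<le> i" by simp
qed

lemma recursive_length_list_decode:
  assumes A: "recursive f k A"
  shows "recursive f k (\<lambda>xs. length (list_decode (A xs)))"
proof -
  have "decidable f (Suc k) (\<lambda>l. (code_tl ^^ (l ! 0)) (A (tl l)) = 0)"
    by (intro decidable_eq recursive_code_tl_funpow recursive_proj recursive_tl A recursive_const) simp
  then have "recursive f k (\<lambda>xs. LEAST i. (\<lambda>l. (code_tl ^^ (l ! 0)) (A (tl l)) = 0) (i # xs))"
  proof (rule recursive_Least)
    fix xs :: "nat list"
    show "\<exists>n. (\<lambda>l. (code_tl ^^ (l ! 0)) (A (tl l)) = 0) (n # xs)"
      using list_decode_code_tl_funpow[of "length (list_decode (A xs))" "A xs"] list_decode_eq_Nil by auto
  qed
  then show ?thesis by (simp add: length_list_decode_Least)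
qed

definition code_nth :: "nat \<Rightarrow> nat \<Rightarrow> nat" where "code_nth x i = code_hd ((code_tl ^^ i) x)"

lemma nth_list_decode:
  "i < length (list_decode x) \<Longrightarrow> list_decode x ! i = code_nth x i"
proof -
  assume i: "i < length (list_decode x)"
  have "list_decode ((code_tl ^^ i) x) = drop i (list_decode x)" by (rule list_decode_code_tl_funpow)
  moreover have "drop i (list_decode x) \<noteq> []" using i by simp
  ultimately have "code_hd ((code_tl ^^ i) x) = hd (drop i (list_decode x))"
    using hd_list_decode by metis
  then show ?thesis using i by (simp add: code_nth_def hd_drop_conv_nth)
qed

lemma recursive_code_nth:
  "recursive f k A \<Longrightarrow> recursive f k B \<Longrightarrow> recursive f k (\<lambda>xs. code_nth (A xs) (B xs))"
  unfolding code_nth_def by (intro recursive_code_hd recursive_code_tl_funpow)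

section \<open>Stage-bounded evaluation\<close>

definition fun_prefix :: "(nat \<Rightarrow> nat) \<Rightarrow> nat \<Rightarrow> nat list" where
  "fun_prefix f s = map f [0..<s]"

lemma length_fun_prefix[simp]: "length (fun_prefix f s) = s" by (simp add: fun_prefix_def)

lemma nth_fun_prefix[simp]: "i < s \<Longrightarrow> fun_prefix f s ! i = f i" by (simp add: fun_prefix_def)

(* Evaluation up to stage s with the oracle known only on the prefix \<sigma>: the value Suc y
   means convergence to y, and 0 means no convergence so far. *)
fun bounded_eval :: "nat list \<Rightarrow> nat \<Rightarrow> rf \<Rightarrow> nat list \<Rightarrow> nat" where
  "bounded_eval \<sigma> s Zero xs = 1"
| "bounded_eval \<sigma> s Succ xs = (case xs of [] \<Rightarrow> 0 | x # _ \<Rightarrow> Suc (Suc x))"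
| "bounded_eval \<sigma> s (Proj i) xs = (if i < length xs then Suc (xs ! i) else 0)"
| "bounded_eval \<sigma> s Orc xs = (case xs of [] \<Rightarrow> 0 | x # _ \<Rightarrow> if x < length \<sigma> then Suc (\<sigma> ! x) else 0)"
| "bounded_eval \<sigma> s (Comp g hs) xs = (let ys = map (\<lambda>h. bounded_eval \<sigma> s h xs) hs in
     if 0 \<in> set ys then 0 else bounded_eval \<sigma> s g (map (\<lambda>y. y - 1) ys))"
| "bounded_eval \<sigma> s (PrimRec g h) xs = (case xs of [] \<Rightarrow> 0 | n # ys \<Rightarrow>
     rec_nat (bounded_eval \<sigma> s g ys) (\<lambda>m r. if r = 0 then 0 else bounded_eval \<sigma> s h (m # (r - 1) # ys)) n)"
| "bounded_eval \<sigma> s (Mu g) xs = (let n = (LEAST n. n = s \<or> bounded_eval \<sigma> s g (n # xs) \<le> 1) in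
     if n < s \<and> bounded_eval \<sigma> s g (n # xs) = 1 then Suc n else 0)"

lemma bounded_eval_Comp_eq_Suc:
  "bounded_eval \<sigma> s (Comp g hs) xs = Suc y \<longleftrightarrow>
    (\<exists>ys. length ys = length hs \<and> (\<forall>i<length hs. bounded_eval \<sigma> s (hs ! i) xs = Suc (ys ! i)) \<and>
      bounded_eval \<sigma> s g ys = Suc y)"
  (is "?lhs \<longleftrightarrow> (\<exists>ys. ?args ys)")
proof
  let ?V = "map (\<lambda>h. bounded_eval \<sigma> s h xs) hs"
  assume ?lhs
  then have nz: "0 \<notin> set ?V" and g: "bounded_eval \<sigma> s g (map (\<lambda>v. v - 1) ?V) = Suc y"
    by (simp_all add: Let_def split: if_splits)
  have "bounded_eval \<sigma> s (hs ! i) xs = Suc (map (\<lambda>v. v - 1) ?V ! i)" if i: "i < length hs" for i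
  proof -
    have "bounded_eval \<sigma> s (hs ! i) xs \<noteq> 0" using nz i by (metis length_map nth_map nth_mem)
    then show ?thesis using i by simp
  qed
  then show "\<exists>ys. ?args ys" using g by (intro exI[of _ "map (\<lambda>v. v - 1) ?V"]) simp
next
  assume "\<exists>ys. ?args ys"
  then obtain ys where ys: "?args ys" ..
  then have "map (\<lambda>h. bounded_eval \<sigma> s h xs) hs = map Suc ys"
    by (intro nth_equalityI) auto
  then show ?lhs using ys by (simp add: comp_def)
qed

lemma bounded_eval_PrimRec_Suc_eq_Suc:
  "bounded_eval \<sigma> s (PrimRec g h) (Suc n # xs) = Suc z \<longleftrightarrow>
    (\<exists>y. bounded_eval \<sigma> s (PrimRec g h) (n # xs) = Suc y \<and> bounded_eval \<sigma> s h (n # y # xs) = Suc z)"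
  by (cases "bounded_eval \<sigma> s (PrimRec g h) (n # xs)") auto

lemma bounded_eval_Mu_eq_Suc:
  "bounded_eval \<sigma> s (Mu g) xs = Suc n \<longleftrightarrow>
    n < s \<and> bounded_eval \<sigma> s g (n # xs) = 1 \<and> (\<forall>m<n. 1 < bounded_eval \<sigma> s g (m # xs))"
  (is "?lhs \<longleftrightarrow> ?rhs")
proof
  let ?L = "LEAST n. n = s \<or> bounded_eval \<sigma> s g (n # xs) \<le> 1"
  assume ?lhs
  then have "n = ?L" "?L < s" "bounded_eval \<sigma> s g (?L # xs) = 1"
    by (simp_all add: Let_def split: if_splits)
  moreover have "1 < bounded_eval \<sigma> s g (m # xs)" if "m < ?L" for m
    using not_less_Least[OF that] by simp
  ultimately show ?rhs by simp
next
  assume ?rhs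
  then have "(LEAST n. n = s \<or> bounded_eval \<sigma> s g (n # xs) \<le> 1) = n"
    by (intro Least_equality) (auto simp: not_le[symmetric])
  then show ?lhs using \<open>?rhs\<close> by (simp add: Let_def)
qed

lemma bounded_eval_mono:
  "bounded_eval \<sigma> s p xs = Suc y \<Longrightarrow> s \<le> t \<Longrightarrow> bounded_eval (\<sigma> @ \<rho>) t p xs = Suc y"
proof (induction p arbitrary: xs y)
  case Orc then show ?case by (auto simp: nth_append split: list.splits if_splits)
next
  case (Comp g hs)
  then obtain ys where ys: "length ys = length hs"
      "\<forall>i<length hs. bounded_eval \<sigma> s (hs ! i) xs = Suc (ys ! i)" "bounded_eval \<sigma> s g ys = Suc y"
    unfolding bounded_eval_Comp_eq_Suc by blast
  then show ?case
    using Comp.IH(1) Comp.IH(2)[OF nth_mem] Comp.prems(2) unfolding bounded_eval_Comp_eq_Suc by blast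
next
  case (PrimRec g h)
  show ?case
  proof (cases xs)
    case (Cons n ys)
    have "bounded_eval \<sigma> s (PrimRec g h) (n # ys) = Suc y \<Longrightarrow>
        bounded_eval (\<sigma> @ \<rho>) t (PrimRec g h) (n # ys) = Suc y" for y
    proof (induction n arbitrary: y)
      case 0 then show ?case using PrimRec.IH(1) PrimRec.prems(2) by simp
    next
      case (Suc n)
      then obtain r where "bounded_eval \<sigma> s (PrimRec g h) (n # ys) = Suc r"
          "bounded_eval \<sigma> s h (n # r # ys) = Suc y"
        unfolding bounded_eval_PrimRec_Suc_eq_Suc by blast
      then show ?case using Suc.IH PrimRec.IH(2) PrimRec.prems(2)
        unfolding bounded_eval_PrimRec_Suc_eq_Suc by blast
    qed
    then show ?thesis using PrimRec.prems(1) Cons by blast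
  qed (use PrimRec.prems in simp)
next
  case (Mu g)
  from Mu.prems(1) have y: "y < s" "bounded_eval \<sigma> s g (y # xs) = 1"
      "\<forall>m<y. 1 < bounded_eval \<sigma> s g (m # xs)"
    unfolding bounded_eval_Mu_eq_Suc by auto
  have "1 < bounded_eval (\<sigma> @ \<rho>) t g (m # xs)" if "m < y" for m
  proof -
    have "1 < bounded_eval \<sigma> s g (m # xs)" using y(3) that by blast
    then have "bounded_eval \<sigma> s g (m # xs) = Suc (bounded_eval \<sigma> s g (m # xs) - 1)"
      by arith
    then show ?thesis using Mu.IH[OF _ Mu.prems(2)] y(3) that by (metis Suc_less_SucD)
  qed
  moreover have "bounded_eval (\<sigma> @ \<rho>) t g (y # xs) = 1"
    using Mu.IH[of "y # xs" 0] y(2) Mu.prems(2) by simp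
  ultimately show ?case using y(1) Mu.prems(2) unfolding bounded_eval_Mu_eq_Suc by simp
qed (simp_all split: list.splits if_splits)

lemma bounded_eval_sound:
  "bounded_eval \<sigma> s p xs = Suc y \<Longrightarrow> (\<forall>i<length \<sigma>. \<sigma> ! i = f i) \<Longrightarrow> eval f p xs y"
proof (induction p arbitrary: xs y)
  case Orc then show ?case by (auto split: list.splits if_splits intro: ev_orc[of f, simplified])
next
  case (Comp g hs)
  then obtain ys where ys: "length ys = length hs"
      "\<forall>i<length hs. bounded_eval \<sigma> s (hs ! i) xs = Suc (ys ! i)" "bounded_eval \<sigma> s g ys = Suc y"
    unfolding bounded_eval_Comp_eq_Suc by blast
  then show ?case using Comp.IH(1) Comp.IH(2)[OF nth_mem] Comp.prems(2) by (blast intro: ev_comp)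
next
  case (PrimRec g h)
  show ?case
  proof (cases xs)
    case (Cons n ys)
    have "bounded_eval \<sigma> s (PrimRec g h) (n # ys) = Suc y \<Longrightarrow> eval f (PrimRec g h) (n # ys) y" for y
    proof (induction n arbitrary: y)
      case 0 then show ?case using PrimRec.IH(1) PrimRec.prems(2) by (simp add: ev_prec0)
    next
      case (Suc n)
      then obtain r where "bounded_eval \<sigma> s (PrimRec g h) (n # ys) = Suc r"
          "bounded_eval \<sigma> s h (n # r # ys) = Suc y"
        unfolding bounded_eval_PrimRec_Suc_eq_Suc by blast
      then show ?case using Suc.IH PrimRec.IH(2) PrimRec.prems(2) by (blast intro: ev_precS)
    qed
    then show ?thesis using PrimRec.prems(1) Cons by blast
  qed (use PrimRec.prems in simp)
next
  case (Mu g)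
  have "\<exists>v. eval f g (m # xs) (Suc v)" if "1 < bounded_eval \<sigma> s g (m # xs)" for m
  proof -
    have "bounded_eval \<sigma> s g (m # xs) = Suc (Suc (bounded_eval \<sigma> s g (m # xs) - 2))"
      using that by simp
    then show ?thesis using Mu.IH Mu.prems(2) by blast
  qed
  then show ?case
    using Mu.prems Mu.IH[of "y # xs" 0] unfolding bounded_eval_Mu_eq_Suc by (auto intro!: ev_mu)
qed (auto split: list.splits if_splits intro: ev_zero ev_succ ev_proj)

lemma bounded_eval_complete:
  "eval f p xs y \<Longrightarrow> \<forall>\<^sub>F s in sequentially. bounded_eval (fun_prefix f s) s p xs = Suc y"
proof (induction rule: eval.induct)
  case (ev_orc x xs)
  show ?case using eventually_gt_at_top[of x] by eventually_elim simp
next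
  case (ev_comp ys hs xs g z)
  have "\<forall>\<^sub>F s in sequentially. \<forall>i\<in>{..<length hs}.
      bounded_eval (fun_prefix f s) s (hs ! i) xs = Suc (ys ! i)"
    using ev_comp.IH(1) by (intro eventually_ball_finite) auto
  with ev_comp.IH(2) show ?case
    by eventually_elim (unfold bounded_eval_Comp_eq_Suc, use ev_comp.hyps(1) in auto)
next
  case (ev_precS g h n xs y z)
  from ev_precS.IH show ?case by eventually_elim simp
next
  case (ev_mu g n xs)
  have "\<forall>\<^sub>F s in sequentially. \<forall>m\<in>{..<n}. 1 < bounded_eval (fun_prefix f s) s g (m # xs)"
  proof (intro eventually_ball_finite ballI)
    fix m assume "m \<in> {..<n}"
    then obtain y where "\<forall>\<^sub>F s in sequentially. bounded_eval (fun_prefix f s) s g (m # xs) = Suc (Suc y)"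
      using ev_mu.IH(2) by auto
    then show "\<forall>\<^sub>F s in sequentially. 1 < bounded_eval (fun_prefix f s) s g (m # xs)"
      by eventually_elim simp
  qed simp
  with ev_mu.IH(1) eventually_gt_at_top[of n] show ?case
    by eventually_elim (unfold bounded_eval_Mu_eq_Suc, auto)
qed simp_all

definition bounded_eval_coded :: "rf \<Rightarrow> nat \<Rightarrow> nat list \<Rightarrow> nat" where
  "bounded_eval_coded p k l = bounded_eval (list_decode (l ! k)) (l ! Suc k) p (take k l)"

lemma recursive_bounded_eval_coded_Comp:
  assumes g_rec: "recursive f (Suc (Suc (length hs))) (bounded_eval_coded g (length hs))"
    and hs_rec: "\<And>h. h \<in> set hs \<Longrightarrow> recursive f (Suc (Suc k)) (bounded_eval_coded h k)"
  shows "recursive f (Suc (Suc k)) (bounded_eval_coded (Comp g hs) k)"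
proof -
  let ?m = "length hs"
  let ?H = "\<lambda>i. bounded_eval_coded (hs ! i) k"
  let ?args = "\<lambda>l. map (\<lambda>i. if i < ?m then ?H i l - 1 else if i = ?m then l ! k else l ! Suc k)
    [0..<Suc (Suc ?m)]"
  have H: "recursive f (Suc (Suc k)) (?H i)" if "i < ?m" for i
    using hs_rec[of "hs ! i"] that by simp
  have P: "recursive f (Suc (Suc k)) (\<lambda>l. \<Prod>i<?m. ?H i l)" by (rule recursive_prod) (rule H)
  have G: "recursive f (Suc (Suc k)) (\<lambda>l. bounded_eval_coded g ?m (?args l))"
    by (rule recursive_comp[OF g_rec]) (auto intro!: recursive_if_const recursive_pred H recursive_proj)
  have "recursive f (Suc (Suc k))
      (\<lambda>l. if (\<Prod>i<?m. ?H i l) = 0 then 0 else bounded_eval_coded g ?m (?args l))"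
    by (rule recursive_if_zero[OF P recursive_const G])
  then show ?thesis
  proof (rule recursive_cong)
    fix l :: "nat list" assume l: "length l = Suc (Suc k)"
    let ?\<sigma> = "list_decode (l ! k)" and ?s = "l ! Suc k" and ?xs = "take k l"
    have V: "map (\<lambda>h. bounded_eval ?\<sigma> ?s h ?xs) hs = map (\<lambda>i. ?H i l) [0..<?m]"
      by (rule nth_equalityI) (simp_all add: bounded_eval_coded_def)
    have Z: "((\<Prod>i<?m. ?H i l) = 0) = (0 \<in> set (map (\<lambda>i. ?H i l) [0..<?m]))"
      by (auto simp: prod_zero_iff)
    have B: "bounded_eval_coded g ?m (?args l) = bounded_eval ?\<sigma> ?s g (map (\<lambda>i. ?H i l - 1) [0..<?m])"
    proof -
      have T: "take ?m (?args l) = map (\<lambda>i. ?H i l - 1) [0..<?m]"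
        by (rule nth_equalityI) simp_all
      have "?args l ! ?m = l ! k" "?args l ! Suc ?m = l ! Suc k"
        by (simp_all del: upt_Suc)
      then show ?thesis by (simp only: bounded_eval_coded_def[of g] T)
    qed
    show "(if (\<Prod>i<?m. ?H i l) = 0 then 0 else bounded_eval_coded g ?m (?args l))
        = bounded_eval_coded (Comp g hs) k l"
      unfolding B Z by (simp only: bounded_eval_coded_def bounded_eval.simps Let_def V map_map comp_def)
  qed
qed

lemma recursive_bounded_eval_coded_PrimRec:
  assumes g_rec: "recursive f (Suc (Suc k)) (bounded_eval_coded g k)"
    and h_rec: "recursive f (Suc (Suc (Suc (Suc k)))) (bounded_eval_coded h (Suc (Suc k)))"
  shows "recursive f (Suc (Suc (Suc k))) (bounded_eval_coded (PrimRec g h) (Suc k))"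
proof -
  define G where "G = bounded_eval_coded g k"
  define H where "H = (\<lambda>l. if l ! 1 = 0 then 0
    else bounded_eval_coded h (Suc (Suc k)) (l ! 0 # (l ! 1 - 1) # drop 2 l))"
  define F where "F = (\<lambda>l. rec_nat (G (tl l)) (\<lambda>m r. H (m # r # tl l)) (hd l))"
  have rG: "recursive f (Suc (Suc k)) G" unfolding G_def by (rule g_rec)
  let ?args = "\<lambda>l. map (\<lambda>i. if i = 0 then l ! 0 else if i = 1 then l ! 1 - 1 else (l ! i :: nat))
    [0..<Suc (Suc (Suc (Suc k)))]"
  have hb: "recursive f (Suc (Suc (Suc (Suc k)))) (\<lambda>l. bounded_eval_coded h (Suc (Suc k)) (?args l))"
    by (rule recursive_comp[OF h_rec]) (auto intro!: recursive_if_const recursive_pred recursive_proj)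
  have "recursive f (Suc (Suc (Suc (Suc k)))) H"
    unfolding H_def
  proof (rule recursive_if_zero[OF recursive_proj recursive_const hb, THEN recursive_cong])
    fix l :: "nat list" assume l: "length l = Suc (Suc (Suc (Suc k)))"
    have ar: "\<And>i. \<not> i \<le> Suc 0 \<Longrightarrow> Suc (Suc (i - Suc (Suc 0))) = i" by arith
    have "?args l = l ! 0 # (l ! 1 - 1) # drop 2 l"
      using l by (intro nth_equalityI) (auto simp: nth_Cons' ar simp del: upt_Suc)
    then show "(if l ! 1 = 0 then 0 else bounded_eval_coded h (Suc (Suc k)) (?args l))
      = (if l ! 1 = 0 then 0 else bounded_eval_coded h (Suc (Suc k)) (l ! 0 # (l ! 1 - 1) # drop 2 l))"
      by simp
  qed simp
  then have rF: "recursive f (Suc (Suc (Suc k))) F"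
    by (intro recursive_prim_rec[OF refl refl rG]) (simp_all add: F_def)
  show ?thesis
  proof (rule recursive_cong[OF rF])
    fix l :: "nat list" assume l: "length l = Suc (Suc (Suc k))"
    then obtain n r where lr: "l = n # r" by (cases l) auto
    have st: "(\<lambda>m r'. H (m # r' # r)) = (\<lambda>m r'. if r' = 0 then 0 else
        bounded_eval (list_decode (r ! k)) (r ! Suc k) h (m # (r' - 1) # take k r))"
      by (intro ext) (simp add: H_def bounded_eval_coded_def)
    show "F l = bounded_eval_coded (PrimRec g h) (Suc k) l"
      unfolding F_def lr using st by (simp add: bounded_eval_coded_def G_def)
  qed
qed

lemma recursive_bounded_eval_coded_Mu:
  assumes g_rec: "recursive f (Suc (Suc (Suc k))) (bounded_eval_coded g (Suc k))"
  shows "recursive f (Suc (Suc k)) (bounded_eval_coded (Mu g) k)"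
proof -
  define B where "B = bounded_eval_coded g (Suc k)"
  have rB: "recursive f (Suc (Suc (Suc k))) B" unfolding B_def by (rule g_rec)
  have rQ: "decidable f (Suc (Suc (Suc k))) (\<lambda>l. l ! 0 = l ! Suc (Suc k) \<or> B l \<le> 1)"
    by (intro decidable_disj decidable_eq decidable_le recursive_proj rB recursive_const) simp_all
  define L where "L l = (LEAST n. n = l ! Suc k \<or> B (n # l) \<le> 1)" for l
  have "recursive f (Suc (Suc k)) (\<lambda>l. LEAST n. (\<lambda>l. l ! 0 = l ! Suc (Suc k) \<or> B l \<le> 1) (n # l))"
    by (rule recursive_Least[OF rQ]) auto
  then have rL: "recursive f (Suc (Suc k)) L" by (simp add: L_def[abs_def])
  have c1: "decidable f (Suc (Suc k)) (\<lambda>l. L l < l ! Suc k)"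
    by (rule decidable_less[OF rL recursive_proj]) simp
  have c2: "recursive f (Suc (Suc k)) (\<lambda>l. B (L l # l))" by (rule recursive_Cons[OF rL rB])
  have c3: "decidable f (Suc (Suc k)) (\<lambda>l. B (L l # l) = 1)" by (rule decidable_eq[OF c2 recursive_const])
  have "recursive f (Suc (Suc k)) (\<lambda>l. if L l < l ! Suc k \<and> B (L l # l) = 1 then Suc (L l) else 0)"
    by (rule recursive_if[OF decidable_conj[OF c1 c3] recursive_Suc[OF rL] recursive_const])
  then show ?thesis
  proof (rule recursive_cong)
    fix l :: "nat list" assume l: "length l = Suc (Suc k)"
    have Bn: "B (n # l) = bounded_eval (list_decode (l ! k)) (l ! Suc k) g (n # take k l)" for n
      by (simp add: B_def bounded_eval_coded_def)
    show "(if L l < l ! Suc k \<and> B (L l # l) = 1 then Suc (L l) else 0)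
        = bounded_eval_coded (Mu g) k l"
      by (simp add: L_def Bn bounded_eval_coded_def Let_def)
  qed
qed

lemma recursive_bounded_eval_coded: "recursive f (Suc (Suc k)) (bounded_eval_coded p k)"
proof (induction p arbitrary: k)
  case Zero
  show ?case by (rule recursive_cong[OF recursive_const[of f _ 1]]) (simp add: bounded_eval_coded_def)
next
  case Succ
  show ?case
  proof (cases k)
    case 0 then show ?thesis
      by (intro recursive_cong[OF recursive_const[of f _ 0]]) (simp add: bounded_eval_coded_def)
  next
    case (Suc k')
    have "recursive f (Suc (Suc k)) (\<lambda>l. Suc (Suc (l ! 0)))" by (intro recursive_Suc recursive_proj) simp
    then show ?thesis
    proof (rule recursive_cong)
      fix l :: "nat list" assume l: "length l = Suc (Suc k)"
      then obtain x r where "l = x # r" by (cases l) auto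
      then show "Suc (Suc (l ! 0)) = bounded_eval_coded Succ k l"
        using Suc by (simp add: bounded_eval_coded_def)
    qed
  qed
next
  case (Proj i)
  have "recursive f (Suc (Suc k)) (\<lambda>l. if i < k then Suc (l ! i) else 0)"
    by (cases "i < k") (auto intro!: recursive_Suc recursive_proj recursive_const)
  then show ?case by (rule recursive_cong) (simp add: bounded_eval_coded_def min_def)
next
  case Orc
  show ?case
  proof (cases k)
    case 0 then show ?thesis
      by (intro recursive_cong[OF recursive_const[of f _ 0]]) (simp add: bounded_eval_coded_def)
  next
    case (Suc k')
    have "recursive f (Suc (Suc k))
        (\<lambda>l. if l ! 0 < length (list_decode (l ! k)) then Suc (code_nth (l ! k) (l ! 0)) else 0)"
      by (intro recursive_if decidable_less recursive_proj recursive_length_list_decode recursive_Suc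
          recursive_code_nth recursive_const) simp_all
    then show ?thesis
    proof (rule recursive_cong)
      fix l :: "nat list" assume l: "length l = Suc (Suc k)"
      then obtain x r where "l = x # r" by (cases l) auto
      then show "(if l ! 0 < length (list_decode (l ! k)) then Suc (code_nth (l ! k) (l ! 0)) else 0)
          = bounded_eval_coded Orc k l"
        using l Suc by (auto simp: bounded_eval_coded_def nth_list_decode)
    qed
  qed
next
  case (Comp g hs)
  then show ?case by (intro recursive_bounded_eval_coded_Comp) simp_all
next
  case (PrimRec g h)
  show ?case
  proof (cases k)
    case 0 then show ?thesis
      by (intro recursive_cong[OF recursive_const[of f _ 0]]) (simp add: bounded_eval_coded_def)
  next
    case (Suc k')
    then show ?thesis using PrimRec.IH by (simp only: recursive_bounded_eval_coded_PrimRec)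
  qed
next
  case (Mu g)
  then show ?case by (rule recursive_bounded_eval_coded_Mu)
qed

section \<open>The Kleene-Brouwer order\<close>

fun kb_less :: "nat list \<Rightarrow> nat list \<Rightarrow> bool" where
  "kb_less [] t = False"
| "kb_less (a # s) [] = True"
| "kb_less (a # s) (b # t) = (a < b \<or> (a = b \<and> kb_less s t))"

lemma kb_less_irrefl: "\<not> kb_less s s"
  by (induction s) auto

lemma kb_less_trans: "kb_less a b \<Longrightarrow> kb_less b c \<Longrightarrow> kb_less a c"
proof (induction a arbitrary: b c)
  case Nil then show ?case by simp
next
  case (Cons x a)
  then show ?case by (cases b; cases c) auto
qed

lemma kb_less_total: "s \<noteq> t \<Longrightarrow> kb_less s t \<or> kb_less t s"
proof (induction s arbitrary: t)
  case Nil then show ?case by (cases t) auto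
next
  case (Cons x s) then show ?case by (cases t) auto
qed

lemma kb_less_append_same: "kb_less (r @ a) (r @ b) = kb_less a b"
  by (induction r) auto

lemma kb_less_snoc: "kb_less (r @ [c]) r"
  using kb_less_append_same[of r "[c]" "[]"] by simp

lemma kb_less_conv_nth:
  "kb_less s t \<longleftrightarrow> (length t < length s \<and> (\<forall>i<length t. s ! i = t ! i)) \<or>
     (\<exists>j<length s. j < length t \<and> (\<forall>i<j. s ! i = t ! i) \<and> s ! j < t ! j)"
proof (induction s t rule: kb_less.induct)
  case (3 a s b t)
  show ?case unfolding kb_less.simps 3 length_Cons All_less_Suc2 Ex_less_Suc2 by auto
qed auto

lemma decidable_kb_less:
  assumes A: "recursive f k A" and B: "recursive f k B"
  shows "decidable f k (\<lambda>xs. kb_less (list_decode (A xs)) (list_decode (B xs)))"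
proof -
  have nth_eq: "decidable f (Suc j) (\<lambda>l. code_nth (A' (tl l)) (l ! 0) = code_nth (B' (tl l)) (l ! 0))"
    if "recursive f j A'" "recursive f j B'" for j A' B'
    using that by (intro decidable_eq recursive_code_nth recursive_tl recursive_proj) simp_all
  have lenA: "recursive f k (\<lambda>xs. length (list_decode (A xs)))"
    and lenB: "recursive f k (\<lambda>xs. length (list_decode (B xs)))"
    using A B by (simp_all add: recursive_length_list_decode)
  have extends: "decidable f k (\<lambda>xs. length (list_decode (B xs)) < length (list_decode (A xs)) \<and>
      (\<forall>i<length (list_decode (B xs)). (\<lambda>l. code_nth (A (tl l)) (l ! 0) = code_nth (B (tl l)) (l ! 0)) (i # xs)))"
    using decidable_less[OF lenB lenA] decidable_ball[OF lenB nth_eq[OF A B]] by (rule decidable_conj)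
  have in_range: "decidable f (Suc k)
      (\<lambda>l. l ! 0 < length (list_decode (A (tl l))) \<and> l ! 0 < length (list_decode (B (tl l))))"
    by (intro decidable_conj decidable_less recursive_proj recursive_length_list_decode recursive_tl A B) simp_all
  have agree_below: "decidable f (Suc k) (\<lambda>l. \<forall>i<l ! 0.
      (\<lambda>l. code_nth (A (tl (tl l))) (l ! 0) = code_nth (B (tl (tl l))) (l ! 0)) (i # l))"
    by (rule decidable_ball[OF recursive_proj nth_eq]) (simp_all add: recursive_tl A B)
  have less_at: "decidable f (Suc k) (\<lambda>l. code_nth (A (tl l)) (l ! 0) < code_nth (B (tl l)) (l ! 0))"
    by (intro decidable_less recursive_code_nth recursive_tl recursive_proj A B) simp_all
  have branches: "decidable f k (\<lambda>xs. \<exists>j<length (list_decode (A xs)).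
      (\<lambda>l. (l ! 0 < length (list_decode (A (tl l))) \<and> l ! 0 < length (list_decode (B (tl l)))) \<and>
          (\<forall>i<l ! 0. (\<lambda>l. code_nth (A (tl (tl l))) (l ! 0) = code_nth (B (tl (tl l))) (l ! 0)) (i # l)) \<and>
          code_nth (A (tl l)) (l ! 0) < code_nth (B (tl l)) (l ! 0)) (j # xs))"
    by (rule decidable_bex[OF lenA decidable_conj[OF in_range decidable_conj[OF agree_below less_at]]])
  show ?thesis
    by (rule decidable_cong[OF decidable_disj[OF extends branches]])
      (auto simp: kb_less_conv_nth nth_list_decode)
qed

lemma eventually_const_if_nonincreasing:
  fixes h :: "nat \<Rightarrow> nat"
  assumes nonincr: "\<And>i. N \<le> i \<Longrightarrow> h (Suc i) \<le> h i"
  shows "\<exists>c M. \<forall>i\<ge>M. h i = c"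
proof -
  define c where "c = (LEAST v. \<exists>i\<ge>N. h i = v)"
  have "\<exists>i\<ge>N. h i = c" unfolding c_def by (rule LeastI_ex) blast
  then obtain M where M: "N \<le> M" "h M = c" by blast
  have below_M: "h i \<le> h M" if "M \<le> i" for i
    using that
  proof (induction rule: dec_induct)
    case (step j) then show ?case using nonincr[of j] M(1) by simp
  qed simp
  have above_c: "c \<le> h i" if "N \<le> i" for i
    unfolding c_def by (rule Least_le) (use that in blast)
  have "h i = c" if "M \<le> i" for i
    using below_M[OF that] above_c[of i] M that by simp
  then show ?thesis by blast
qed

lemma kb_descending_extends_prefix:
  assumes desc: "\<And>i. kb_less (\<sigma> (Suc i)) (\<sigma> i)"
    and pre: "\<And>i. N \<le> i \<Longrightarrow> \<exists>r. \<sigma> i = \<rho> @ r"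
  shows "\<exists>c M. \<forall>i\<ge>M. \<exists>r. \<sigma> i = (\<rho> @ [c]) @ r"
proof -
  define r where "r i = drop (length \<rho>) (\<sigma> i)" for i
  have sr: "\<sigma> i = \<rho> @ r i" if "N \<le> i" for i
    using pre[OF that] unfolding r_def by auto
  have kr: "kb_less (r (Suc i)) (r i)" if "N \<le> i" for i
    using desc[of i] sr[OF that] sr[of "Suc i"] that kb_less_append_same by simp
  have ne: "r i \<noteq> []" if le: "Suc N \<le> i" for i
  proof -
    obtain i' where "i = Suc i'" "N \<le> i'" using le by (cases i) auto
    then show ?thesis using kr[of i'] by auto
  qed
  have "hd (r (Suc i)) \<le> hd (r i)" if i: "Suc N \<le> i" for i
  proof -
    obtain a u where a: "r (Suc i) = a # u" using ne[of "Suc i"] i by (cases "r (Suc i)") auto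
    obtain b v where b: "r i = b # v" using ne[of i] i by (cases "r i") auto
    have "kb_less (a # u) (b # v)" using kr[of i] a b i by simp
    then show ?thesis using a b by auto
  qed
  then obtain c M where c: "\<forall>i\<ge>M. hd (r i) = c"
    using eventually_const_if_nonincreasing[of "Suc N" "\<lambda>i. hd (r i)"] by blast
  have "\<sigma> i = (\<rho> @ [c]) @ tl (r i)" if i: "max M (Suc N) \<le> i" for i
  proof -
    have "r i \<noteq> []" using ne[of i] i by simp
    moreover have "hd (r i) = c" using c i by simp
    moreover have "\<sigma> i = \<rho> @ r i" using sr[of i] i by simp
    ultimately show ?thesis by (cases "r i") auto
  qed
  then show ?thesis by blast
qed

lemma kb_descending_chain_path:
  fixes \<sigma> :: "nat \<Rightarrow> nat list" and T :: "nat list \<Rightarrow> bool"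
  assumes desc: "\<And>i. kb_less (\<sigma> (Suc i)) (\<sigma> i)"
    and inT: "\<And>i. T (\<sigma> i)"
    and closed: "\<And>r a. T (r @ a) \<Longrightarrow> T r"
  shows "\<exists>f. \<forall>s. T (fun_prefix f s)"
proof -
  define Inv where "Inv n p \<longleftrightarrow> length (fst p) = n \<and> (\<forall>i\<ge>snd p. \<exists>r. \<sigma> i = fst p @ r)"
    for n and p :: "nat list \<times> nat"
  have "\<exists>pth. \<forall>k. Inv k (pth k) \<and> (\<exists>c. fst (pth (Suc k)) = fst (pth k) @ [c])"
  proof (rule dependent_nat_choice)
    show "\<exists>p. Inv 0 p" by (intro exI[of _ "([], 0)"]) (simp add: Inv_def)
    show "\<exists>q. Inv (Suc k) q \<and> (\<exists>c. fst q = fst p @ [c])" if p: "Inv k p" for p k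
    proof -
      obtain c M where "\<forall>i\<ge>M. \<exists>r. \<sigma> i = (fst p @ [c]) @ r"
        using kb_descending_extends_prefix[where \<sigma>=\<sigma>, OF desc, of "snd p" "fst p"] p unfolding Inv_def by blast
      then show ?thesis using p unfolding Inv_def by (intro exI[of _ "(fst p @ [c], M)"]) auto
    qed
  qed
  then obtain pth where inv: "\<And>k. Inv k (pth k)"
    and ext: "\<And>k. \<exists>c. fst (pth (Suc k)) = fst (pth k) @ [c]"
    by blast
  define f where "f k = last (fst (pth (Suc k)))" for k
  have ft: "fun_prefix f k = fst (pth k)" for k
  proof (induction k)
    case 0 then show ?case using inv[of 0] by (simp add: Inv_def fun_prefix_def)
  next
    case (Suc k)
    obtain c where "fst (pth (Suc k)) = fst (pth k) @ [c]" using ext by blast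
    then show ?case using Suc by (simp add: fun_prefix_def f_def)
  qed
  have "T (fun_prefix f s)" for s
  proof -
    obtain r where "\<sigma> (snd (pth s)) = fst (pth s) @ r" using inv[of s] unfolding Inv_def by blast
    then show ?thesis using inT[of "snd (pth s)"] closed ft by metis
  qed
  then show ?thesis by blast
qed

(* The non-nodes, placed after the nodes, only make the order linear on all of omega; they do
   not affect its well-foundedness. *)
definition kb_order :: "(nat list \<Rightarrow> bool) \<Rightarrow> nat rel" where
  "kb_order T = {(x, y). (T (list_decode x) \<and> T (list_decode y) \<and> kb_less (list_decode x) (list_decode y)) \<or>
                     (T (list_decode x) \<and> \<not> T (list_decode y)) \<or>
                     (\<not> T (list_decode x) \<and> \<not> T (list_decode y) \<and> x < y)}"

lemma strict_linear_order_kb_order: "strict_linear_order (kb_order T)"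
  unfolding strict_linear_order_on_def
proof (intro conjI)
  show "trans (kb_order T)"
    unfolding trans_def kb_order_def using kb_less_trans by auto
  show "irrefl (kb_order T)"
    unfolding irrefl_def kb_order_def using kb_less_irrefl by auto
  show "total_on UNIV (kb_order T)"
    unfolding total_on_def
  proof (intro ballI impI)
    fix x y :: nat assume "x \<noteq> y"
    then have "kb_less (list_decode x) (list_decode y) \<or> kb_less (list_decode y) (list_decode x)"
      using kb_less_total list_decode_eq by blast
    then show "(x, y) \<in> kb_order T \<or> (y, x) \<in> kb_order T"
      unfolding kb_order_def using \<open>x \<noteq> y\<close> by auto
  qed
qed

lemma kb_order_descending_chain_path:
  assumes g: "\<And>i. (g (Suc i), g i) \<in> kb_order T" and closed: "\<And>r a. T (r @ a) \<Longrightarrow> T r"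
  shows "\<exists>f. \<forall>s. T (fun_prefix f s)"
proof -
  have "\<exists>i0. T (list_decode (g i0))"
  proof (rule ccontr)
    assume "\<nexists>i0. T (list_decode (g i0))"
    then have "\<forall>i. (g (Suc i), g i) \<in> {(x, y). x < y}" using g unfolding kb_order_def by auto
    then show False using wf_less unfolding wf_iff_no_infinite_down_chain by blast
  qed
  then obtain i0 where i0: "T (list_decode (g i0))" ..
  have T: "T (list_decode (g (i0 + j)))" for j
  proof (induction j)
    case (Suc j) then show ?case using g[of "i0 + j"] unfolding kb_order_def by auto
  qed (use i0 in simp)
  have "kb_less (list_decode (g (i0 + Suc j))) (list_decode (g (i0 + j)))" for j
    using g[of "i0 + j"] T[of j] T[of "Suc j"] unfolding kb_order_def by auto
  then show ?thesis using kb_descending_chain_path[of "\<lambda>j. list_decode (g (i0 + j))" T] T closed by blast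
qed

lemma not_wf_kb_order_iff:
  assumes closed: "\<And>r a. T (r @ a) \<Longrightarrow> T r"
  shows "\<not> wf (kb_order T) \<longleftrightarrow> (\<exists>f. \<forall>s. T (fun_prefix f s))"
proof
  assume "\<not> wf (kb_order T)"
  then show "\<exists>f. \<forall>s. T (fun_prefix f s)"
    unfolding wf_iff_no_infinite_down_chain using kb_order_descending_chain_path closed by blast
next
  assume "\<exists>f. \<forall>s. T (fun_prefix f s)"
  then obtain f where f: "\<And>s. T (fun_prefix f s)" by blast
  have "kb_less (fun_prefix f (Suc i)) (fun_prefix f i)" for i
    using kb_less_snoc[of "fun_prefix f i" "f i"] by (simp add: fun_prefix_def)
  then have "(list_encode (fun_prefix f (Suc i)), list_encode (fun_prefix f i)) \<in> kb_order T" for i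
    using f unfolding kb_order_def by simp
  then have "\<exists>g. \<forall>i. (g (Suc i), g i) \<in> kb_order T"
    by (intro exI[of _ "\<lambda>i. list_encode (fun_prefix f i)"]) simp
  then show "\<not> wf (kb_order T)" by (simp add: wf_iff_no_infinite_down_chain)
qed

section \<open>The tree of nonhalting computations\<close>

definition nonhalting_tree :: "rf \<Rightarrow> nat \<Rightarrow> nat list \<Rightarrow> bool" where
  "nonhalting_tree e n \<sigma> \<longleftrightarrow> bounded_eval \<sigma> (length \<sigma>) e [n] = 0"

lemma nonhalting_tree_prefix_closed:
  "nonhalting_tree e n (r @ a) \<Longrightarrow> nonhalting_tree e n r"
proof (rule ccontr)
  assume a: "nonhalting_tree e n (r @ a)" and "\<not> nonhalting_tree e n r"
  then obtain y where "bounded_eval r (length r) e [n] = Suc y" unfolding nonhalting_tree_def using not0_implies_Suc by blast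
  then have "bounded_eval (r @ a) (length (r @ a)) e [n] = Suc y" by (rule bounded_eval_mono) simp
  then show False using a unfolding nonhalting_tree_def by simp
qed

lemma nonhalting_tree_path_iff:
  "(\<exists>f. \<forall>s. nonhalting_tree e n (fun_prefix f s)) \<longleftrightarrow> \<not> (\<forall>f. \<exists>y. eval f e [n] y)"
proof
  assume "\<exists>f. \<forall>s. nonhalting_tree e n (fun_prefix f s)"
  then obtain f where f: "\<And>s. bounded_eval (fun_prefix f s) s e [n] = 0" unfolding nonhalting_tree_def by auto
  have "\<not> (\<exists>y. eval f e [n] y)"
  proof
    assume "\<exists>y. eval f e [n] y"
    then obtain y where "eval f e [n] y" by blast
    then have "\<forall>\<^sub>F s in sequentially. bounded_eval (fun_prefix f s) s e [n] = Suc y"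
      by (rule bounded_eval_complete)
    then obtain s where "bounded_eval (fun_prefix f s) s e [n] = Suc y"
      by (auto simp: eventually_sequentially)
    then show False using f[of s] by simp
  qed
  then show "\<not> (\<forall>f. \<exists>y. eval f e [n] y)" by blast
next
  assume "\<not> (\<forall>f. \<exists>y. eval f e [n] y)"
  then obtain f where f: "\<And>y. \<not> eval f e [n] y" by blast
  have "nonhalting_tree e n (fun_prefix f s)" for s
  proof (rule ccontr)
    assume "\<not> nonhalting_tree e n (fun_prefix f s)"
    then obtain y where "bounded_eval (fun_prefix f s) (length (fun_prefix f s)) e [n] = Suc y"
      unfolding nonhalting_tree_def using not0_implies_Suc by blast
    then have "eval f e [n] y" by (rule bounded_eval_sound) simp
    then show False using f by blast
  qed
  then show "\<exists>f. \<forall>s. nonhalting_tree e n (fun_prefix f s)" by blast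
qed

lemma decidable_kb_order_nonhalting_tree:
  "decidable f 3 (\<lambda>l. (l ! 1, l ! 2) \<in> kb_order (nonhalting_tree e (l ! 0)))"
proof -
  have B: "recursive f 3 (bounded_eval_coded e 1)"
    using recursive_bounded_eval_coded[of f 1 e] by (simp add: numeral_eq_Suc)
  have T: "decidable f 3 (\<lambda>l. nonhalting_tree e (l ! 0) (list_decode (l ! i)))" if i: "i < 3" for i
  proof -
    have "recursive f 3 (\<lambda>l. bounded_eval_coded e 1 [l ! 0, l ! i, length (list_decode (l ! i))])"
      by (rule recursive_comp3[OF B]; (rule recursive_length_list_decode)?; rule recursive_proj)
        (use i in simp_all)
    then show ?thesis
      by (rule decidable_cong[OF decidable_eq[OF _ recursive_const[of f 3 0]]])
        (simp add: bounded_eval_coded_def nonhalting_tree_def)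
  qed
  have K: "decidable f 3 (\<lambda>l. kb_less (list_decode (l ! 1)) (list_decode (l ! 2)))"
    by (rule decidable_kb_less; rule recursive_proj) simp_all
  have LT: "decidable f 3 (\<lambda>l. l ! 1 < l ! 2)"
    by (rule decidable_less; rule recursive_proj) simp_all
  show ?thesis
    unfolding kb_order_def mem_Collect_eq prod.case
    by (intro decidable_disj decidable_conj decidable_not T K LT) simp_all
qed

lemma wf_kb_order_nonhalting_tree_iff:
  "wf (kb_order (nonhalting_tree e n)) \<longleftrightarrow> (\<forall>f. \<exists>y. eval f e [n] y)"
proof -
  have "\<not> wf (kb_order (nonhalting_tree e n)) \<longleftrightarrow> (\<exists>f. \<forall>s. nonhalting_tree e n (fun_prefix f s))"
    by (rule not_wf_kb_order_iff) (rule nonhalting_tree_prefix_closed)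
  then show ?thesis using nonhalting_tree_path_iff by blast
qed

section \<open>Indices of uniformly computable linear orders\<close>

lemma map_enc_inject:
  "(\<And>h q. h \<in> set hs \<Longrightarrow> enc h = enc q \<Longrightarrow> h = q) \<Longrightarrow> map enc hs = map enc hs' \<Longrightarrow> hs = hs'"
proof (induction hs arbitrary: hs')
  case Nil then show ?case by simp
next
  case (Cons a hs) then show ?case by (cases hs') auto
qed

lemma enc_inject: "enc p = enc q \<Longrightarrow> p = q"
proof (induction p arbitrary: q)
  case Zero then show ?case by (cases q) auto
next
  case Succ then show ?case by (cases q) auto
next
  case (Proj i) then show ?case by (cases q) auto
next
  case Orc then show ?case by (cases q) auto
next
  case (Comp g hs)
  show ?case
  proof (cases q)
    case (Comp g' hs')
    then have "enc g = enc g'" "list_encode (map enc hs) = list_encode (map enc hs')"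
      using Comp.prems by auto
    then have "g = g'" "map enc hs = map enc hs'" using Comp.IH(1) list_encode_eq by auto
    moreover have "hs = hs'" using map_enc_inject[OF Comp.IH(2)] \<open>map enc hs = map enc hs'\<close> by blast
    ultimately show ?thesis using Comp by simp
  qed (use Comp.prems in auto)
next
  case (PrimRec g h) then show ?case by (cases q) auto
next
  case (Mu g) then show ?case by (cases q) auto
qed

definition specialize :: "rf \<Rightarrow> nat \<Rightarrow> rf" where
  "specialize P n = Comp P [const_prog n, Proj 0, Proj 1]"

lemma eval_specialize:
  assumes P: "\<forall>l. length l = 3 \<longrightarrow> eval f P l (F l)"
  shows "eval f (specialize P n) [x, y] (F [n, x, y])"
  unfolding specialize_def
proof (rule ev_comp[where ys="[n, x, y]"])
  show "\<forall>i<length [const_prog n, Proj 0, Proj 1].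
          eval f ([const_prog n, Proj 0, Proj 1] ! i) [x, y] ([n, x, y] ! i)"
  proof (intro allI impI)
    fix i assume "i < length [const_prog n, Proj 0, Proj 1]"
    then have "i = 0 \<or> i = 1 \<or> i = 2" by auto
    then show "eval f ([const_prog n, Proj 0, Proj 1] ! i) [x, y] ([n, x, y] ! i)"
      using eval_const_prog ev_proj[of 0 "[x,y]" f] ev_proj[of 1 "[x,y]" f] by auto
  qed
qed (use P in simp_all)

lemma L_enc_specialize:
  assumes P: "\<forall>l. length l = 3 \<longrightarrow> eval (\<lambda>_. 0) P l (if (l ! 1, l ! 2) \<in> R (l ! 0) then 0 else 1)"
    and R: "strict_linear_order (R n)"
  shows "L (enc (specialize P n)) = R n"
proof -
  have ev: "eval (\<lambda>_. 0) (specialize P n) [x, y] z \<longleftrightarrow> z = (if (x, y) \<in> R n then 0 else 1)" for x y z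
    using eval_specialize[OF P, of n x y] eval_deterministic by auto
  have rel: "comp_rel (specialize P n) = R n"
    unfolding comp_rel_def using ev by auto
  have "total2 (specialize P n)" unfolding total2_def using ev by blast
  then have "\<exists>p. enc (specialize P n) = enc p \<and> total2 p \<and> strict_linear_order (comp_rel p)"
    using rel R by metis
  moreover have "(THE p. enc (specialize P n) = enc p) = specialize P n"
    using enc_inject by blast
  ultimately show ?thesis unfolding L_def using rel by simp
qed

lemma recursive_enc_const_prog: "recursive f 1 (\<lambda>l. enc (const_prog (l ! 0)))"
proof (rule recursive_prim_rec[where k=0 and G="\<lambda>_. enc Zero"
      and H="\<lambda>l. prod_encode (4, prod_encode (enc Succ, Suc (prod_encode (l ! 1, 0))))"])
  show "recursive f 2 (\<lambda>l. prod_encode (4, prod_encode (enc Succ, Suc (prod_encode (l ! 1, 0)))))"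
    by (intro recursive_prod_encode recursive_const recursive_Suc recursive_proj) simp
qed (auto intro: recursive_const)

lemma recursive_enc_specialize: "recursive f 1 (\<lambda>l. enc (specialize P (l ! 0)))"
proof -
  have "recursive f 1 (\<lambda>l. enc (const_prog (l ! 0)))" by (rule recursive_enc_const_prog)
  then have "recursive f 1 (\<lambda>l. prod_encode (4, prod_encode (enc P, Suc (prod_encode
      (enc (const_prog (l ! 0)), Suc (prod_encode (enc (Proj 0), Suc (prod_encode (enc (Proj 1), 0)))))))))"
    by (intro recursive_prod_encode recursive_const recursive_Suc)
  then show ?thesis by (simp add: specialize_def)
qed

lemma L_indices_uniform:
  assumes R: "decidable (\<lambda>_. 0) 3 (\<lambda>l. (l ! 1, l ! 2) \<in> R (l ! 0))"
    and lin: "\<And>n. strict_linear_order (R n)"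
  shows "\<exists>idx. (\<forall>f. recursive f 1 (\<lambda>l. idx (l ! 0))) \<and> (\<forall>n. L (idx n) = R n)"
proof -
  obtain P where P: "\<forall>l. length l = 3 \<longrightarrow>
      eval (\<lambda>_. 0) P l (if (l ! 1, l ! 2) \<in> R (l ! 0) then 0 else 1)"
    using R unfolding decidable_def recursive_def by blast
  show ?thesis
  proof (intro exI conjI allI)
    show "recursive f 1 (\<lambda>l. enc (specialize P (l ! 0)))" for f
      by (rule recursive_enc_specialize)
    show "L (enc (specialize P n)) = R n" for n
      using P lin by (rule L_enc_specialize)
  qed
qed

section \<open>Well-foundedness is c.e. in a loquaciously high degree\<close>

lemma ce_in_Ex:
  assumes "decidable (chi D) 2 (\<lambda>l. P (l ! 1) (l ! 0))"
  shows "ce_in D {n. \<exists>k. P n k}"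
proof -
  obtain h where h: "\<And>l. length l = 2 \<Longrightarrow> eval (chi D) h l (if P (l ! 1) (l ! 0) then 0 else 1)"
    using assms unfolding decidable_def recursive_def by blast
  have "eval (chi D) h (k # [n]) (if P n k then 0 else 1)" for k n
    using h[of "[k, n]"] by simp
  then have "(\<exists>y. eval (chi D) (Mu h) [n] y) \<longleftrightarrow> (\<exists>k. P n k)" for n
    using eval_Mu_iff[of "chi D" h "[n]" "\<lambda>l. if P n (l ! 0) then 0 else 1"] by simp
  then show ?thesis unfolding ce_in_def by (intro exI[of _ "Mu h"]) simp
qed

lemma recursive_of_eval2:
  assumes "\<And>n k. eval f \<Phi> [n, k] (g n k)"
  shows "recursive f 2 (\<lambda>l. g (l ! 0) (l ! 1))"
  unfolding recursive_def
proof (intro exI allI impI)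
  fix l :: "nat list" assume "length l = 2"
  then obtain a b where "l = [a, b]" by (auto simp: length_Suc_conv numeral_2_eq_2)
  then show "eval f \<Phi> l (g (l ! 0) (l ! 1))" using assms by simp
qed

lemma decidable_descends_at:
  assumes g: "recursive f 2 (\<lambda>l. g (l ! 0) (l ! 1))"
    and idx: "recursive f 1 (\<lambda>l. idx (l ! 0))"
    and R: "decidable f 3 (\<lambda>l. (l ! 1, l ! 2) \<in> R (l ! 0))"
  shows "decidable f 2 (\<lambda>l. (g (idx (l ! 1)) (Suc (l ! 0)), g (idx (l ! 1)) (l ! 0)) \<in> R (l ! 1))"
proof -
  have I: "recursive f 2 (\<lambda>l. idx (l ! 1))"
    using recursive_comp1[OF idx recursive_proj[of 1 2]] by simp
  have G1: "recursive f 2 (\<lambda>l. g (idx (l ! 1)) (Suc (l ! 0)))"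
    using recursive_comp2[OF g I recursive_Suc[OF recursive_proj[of 0 2]]] by simp
  have G0: "recursive f 2 (\<lambda>l. g (idx (l ! 1)) (l ! 0))"
    using recursive_comp2[OF g I recursive_proj[of 0 2]] by simp
  have "recursive f 2 (\<lambda>l. (\<lambda>l. if (l ! 1, l ! 2) \<in> R (l ! 0) then 0 else 1)
      [l ! 1, g (idx (l ! 1)) (Suc (l ! 0)), g (idx (l ! 1)) (l ! 0)])"
    using R unfolding decidable_def by (rule recursive_comp3[OF _ recursive_proj G1 G0]) simp
  then show ?thesis unfolding decidable_def by simp
qed

lemma wf_iff_ex_not_descending:
  assumes "\<not> wf r \<Longrightarrow> \<forall>k. (s (Suc k), s k) \<in> r"
  shows "wf r \<longleftrightarrow> (\<exists>k. (s (Suc k), s k) \<notin> r)"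
  using assms wf_iff_no_infinite_down_chain[of r] by blast

lemma ce_in_wf_of_loquaciously_high:
  assumes D: "loquaciously_high_ds D"
    and R: "\<And>f. decidable f 3 (\<lambda>l. (l ! 1, l ! 2) \<in> R (l ! 0))"
    and lin: "\<And>n. strict_linear_order (R n)"
  shows "ce_in D {n. wf (R n)}"
proof -
  obtain idx where idx: "recursive (chi D) 1 (\<lambda>l. idx (l ! 0))" and L_idx: "\<And>n. L (idx n) = R n"
    using L_indices_uniform[OF R lin] by blast
  obtain \<Phi> g where \<Phi>: "\<And>n k. eval (chi D) \<Phi> [n, k] (g n k)"
    and desc: "\<And>n. \<not> wf (L n) \<Longrightarrow> \<forall>k. (g n (Suc k), g n k) \<in> L n"
    using D unfolding loquaciously_high_ds_def by blast
  have "wf (R n) \<longleftrightarrow> (\<exists>k. (g (idx n) (Suc k), g (idx n) k) \<notin> R n)" for n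
    using desc[of "idx n"] unfolding L_idx by (rule wf_iff_ex_not_descending)
  moreover have "decidable (chi D) 2
      (\<lambda>l. (g (idx (l ! 1)) (Suc (l ! 0)), g (idx (l ! 1)) (l ! 0)) \<notin> R (l ! 1))"
    by (rule decidable_not[OF decidable_descends_at[OF recursive_of_eval2[OF \<Phi>] idx R]])
  ultimately show ?thesis using ce_in_Ex[where P="\<lambda>n k. (g (idx n) (Suc k), g (idx n) k) \<notin> R n"]
    by simp
qed

theorem mainTheorem10:
  fixes D :: "nat set"
  assumes "loquaciously_high_ds D"
  shows "\<forall>A. Pi11 A \<longrightarrow> ce_in D A"
proof (intro allI impI)
  fix A assume "Pi11 A"
  then obtain e where "\<And>n. n \<in> A \<longleftrightarrow> (\<forall>f. \<exists>y. eval f e [n] y)"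
    unfolding Pi11_def by blast
  then have "A = {n. wf (kb_order (nonhalting_tree e n))}"
    using wf_kb_order_nonhalting_tree_iff by blast
  then show "ce_in D A"
    using ce_in_wf_of_loquaciously_high[OF assms decidable_kb_order_nonhalting_tree strict_linear_order_kb_order]
    by simp
qed

end
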